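(* In the binary noisy-label setting described in the context, for every classifier $h$ and every function $g:\{-1,+1\}^2\to\mathrm{dom}(f^* )$, $$\widetilde{d}_f(h,g)=(1-e_+-e_-)\,d_f(h,g)+\mathrm{Bias}_f(h,g).$$
   Context: $(X,Y)$ is a random pair with features $X\in\mathcal X$ and clean label $Y\in\{-1,+1\}$. A noisy label $\tilde Y\in\{-1,+1\}$ is generated from $Y$, conditionally independently of $X$ given $Y$, with noise rates $e_+={\mathbb P}(\tilde Y=-1\mid Y=+1)$, $e_-={\mathbb P}(\tilde Y=+1\mid Y=-1)$, $e_++e_-<1$. A classifier is a measurable map $h:\mathcal X\to\{-1,+1\}$. $P=P_{h\times Y}$ is the joint law of $(h(X),Y)$ on $\{-1,+1\}^2$ and $Q=Q_{h\times Y}$ the product of its marginals ${\mathbb P}(h(X)=y){\mathbb P}(Y=y')$; $\tilde P,\tilde Q$ are defined identically with $\tilde Y$ in place of $Y$. $f$ is convex with $f(1)=0$ and $f^*(u)=\sup_v\{uv-f(v)\}$ is its Fenchel conjugate with domain $\mathrm{dom}(f^* )$. Define $d_f(h,g)=\mathbb E_{Z\sim P}[g(Z)]-\mathbb E_{Z\sim Q}[f^*(g(Z))]$ and $\widetilde d_f(h,g)=\mathbb E_{Z\sim \tilde P}[g(Z)]-\mathbb E_{Z\sim \tilde Q}[f^*(g(Z))]$. For $y\in\{-1,+1\}$, $\Delta^y_f(h,g)=\mathbb E_X[g(h(X),y)]-\mathbb E_X[f^*(g(h(X),y))]$, and $\mathrm{Bias}_f(h,g)=e_+\Delta^{-1}_f(h,g)+e_-\Delta^{+1}_f(h,g)$.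 *)

theory Defs
  imports "HOL-Probability.Probability"
begin

definition labels :: "int set" where
  "labels = {-1, 1}"

definition convex_ext :: "(real \<Rightarrow> ereal) \<Rightarrow> bool" where
  "convex_ext f \<longleftrightarrow> (\<forall>x y t. 0 \<le> t \<and> t \<le> 1 \<longrightarrow>
      f (t * x + (1 - t) * y) \<le> ereal t * f x + ereal (1 - t) * f y)"

definition fconj :: "(real \<Rightarrow> ereal) \<Rightarrow> real \<Rightarrow> ereal" where
  "fconj f u = (SUP v. ereal (u * v) - f v)"

definition fdom :: "(real \<Rightarrow> ereal) \<Rightarrow> real set" where
  "fdom f = {u. fconj f u < \<infinity>}"

definition joint_law :: "'a measure \<Rightarrow> ('a \<Rightarrow> int) \<Rightarrow> ('a \<Rightarrow> int) \<Rightarrow> int \<times> int \<Rightarrow> real" where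
  "joint_law M U V = (\<lambda>(a, y). measure M {\<omega> \<in> space M. U \<omega> = a \<and> V \<omega> = y})"

definition prod_law :: "'a measure \<Rightarrow> ('a \<Rightarrow> int) \<Rightarrow> ('a \<Rightarrow> int) \<Rightarrow> int \<times> int \<Rightarrow> real" where
  "prod_law M U V = (\<lambda>(a, y). measure M {\<omega> \<in> space M. U \<omega> = a} * measure M {\<omega> \<in> space M. V \<omega> = y})"

definition lexp :: "(int \<times> int \<Rightarrow> real) \<Rightarrow> (int \<times> int \<Rightarrow> real) \<Rightarrow> real" where
  "lexp L \<phi> = (\<Sum>z\<in>labels \<times> labels. L z * \<phi> z)"

text \<open>d_f(h,g) with the label variable V (V = Y gives d_f, V = noisy Y gives tilde d_f).\<close>
definition dvar :: "'a measure \<Rightarrow> ('a \<Rightarrow> 'x) \<Rightarrow> ('a \<Rightarrow> int) \<Rightarrow> ('x \<Rightarrow> int)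
    \<Rightarrow> (real \<Rightarrow> ereal) \<Rightarrow> (int \<times> int \<Rightarrow> real) \<Rightarrow> real" where
  "dvar M X V h f g =
     lexp (joint_law M (\<lambda>\<omega>. h (X \<omega>)) V) g
     - lexp (prod_law M (\<lambda>\<omega>. h (X \<omega>)) V) (\<lambda>z. real_of_ereal (fconj f (g z)))"

definition Delta :: "'a measure \<Rightarrow> ('a \<Rightarrow> 'x) \<Rightarrow> ('x \<Rightarrow> int)
    \<Rightarrow> (real \<Rightarrow> ereal) \<Rightarrow> (int \<times> int \<Rightarrow> real) \<Rightarrow> int \<Rightarrow> real" where
  "Delta M X h f g y =
     (\<integral>\<omega>. g (h (X \<omega>), y) \<partial>M) - (\<integral>\<omega>. real_of_ereal (fconj f (g (h (X \<omega>), y))) \<partial>M)"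

definition Bias :: "real \<Rightarrow> real \<Rightarrow> 'a measure \<Rightarrow> ('a \<Rightarrow> 'x) \<Rightarrow> ('x \<Rightarrow> int)
    \<Rightarrow> (real \<Rightarrow> ereal) \<Rightarrow> (int \<times> int \<Rightarrow> real) \<Rightarrow> real" where
  "Bias ep em M X h f g = ep * Delta M X h f g (-1) + em * Delta M X h f g 1"

end

theory Submission
  imports Defs
begin

text \<open>Since the noisy label depends on \<open>X\<close> only through \<open>Y\<close>, the joint law of \<open>(h(X), \<tilde>Y)\<close>
  is the joint law of \<open>(h(X), Y)\<close> pushed through the noise kernel, and likewise for the
  marginals of the labels. The noise kernel is \<open>1 - e\<^sub>+ - e\<^sub>-\<close> times the identity plus the
  kernel that replaces every label by \<open>-1\<close> with probability \<open>e\<^sub>+\<close> and by \<open>+1\<close> with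
  probability \<open>e\<^sub>-\<close>; the latter forgets \<open>Y\<close>, so in both \<open>\<tilde>P\<close> and \<open>\<tilde>Q\<close> it leaves only the
  law of \<open>h(X)\<close>, which produces \<open>Bias\<^sub>f\<close>.\<close>

lemma sum_labels: "(\<Sum>y\<in>labels. \<phi> y) = \<phi> 1 + \<phi> (-1)"
  by (simp add: labels_def add.commute)

lemma lexp_eq_sum_labels: "lexp L \<phi> = (\<Sum>a\<in>labels. \<Sum>y\<in>labels. L (a, y) * \<phi> (a, y))"
  unfolding lexp_def by (simp add: sum.cartesian_product labels_def)

lemma (in finite_measure) measure_split_label:
  assumes [measurable]: "Measurable.pred M P" "V \<in> M \<rightarrow>\<^sub>M count_space UNIV"
    and "\<forall>\<omega>\<in>space M. V \<omega> \<in> labels"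
  shows "measure M {\<omega>\<in>space M. P \<omega>}
       = (\<Sum>y\<in>labels. measure M {\<omega>\<in>space M. P \<omega> \<and> V \<omega> = y})"
proof -
  have "{\<omega>\<in>space M. P \<omega>} = {\<omega>\<in>space M. P \<omega> \<and> V \<omega> = 1} \<union> {\<omega>\<in>space M. P \<omega> \<and> V \<omega> = -1}"
    using assms(3) by (auto simp: labels_def)
  moreover have "measure M ({\<omega>\<in>space M. P \<omega> \<and> V \<omega> = 1} \<union> {\<omega>\<in>space M. P \<omega> \<and> V \<omega> = -1})
      = measure M {\<omega>\<in>space M. P \<omega> \<and> V \<omega> = 1} + measure M {\<omega>\<in>space M. P \<omega> \<and> V \<omega> = -1}"
    by (rule finite_measure_Union) (measurable, auto)
  ultimately show ?thesis by (simp add: sum_labels)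
qed

lemma (in finite_measure) integral_label_valued:
  assumes [measurable]: "H \<in> M \<rightarrow>\<^sub>M count_space UNIV"
    and "\<forall>\<omega>\<in>space M. H \<omega> \<in> labels"
  shows "(\<integral>\<omega>. \<phi> (H \<omega>) \<partial>M) = (\<Sum>a\<in>labels. \<phi> a * measure M {\<omega>\<in>space M. H \<omega> = a})"
proof -
  have "(\<integral>\<omega>. \<phi> (H \<omega>) \<partial>M) = (\<integral>\<omega>. (\<Sum>a\<in>labels. \<phi> a * indicator {\<omega>\<in>space M. H \<omega> = a} \<omega>) \<partial>M)"
    using assms(2) by (intro Bochner_Integration.integral_cong) (auto simp: labels_def indicator_def)
  also have "\<dots> = (\<Sum>a\<in>labels. \<phi> a * measure M {\<omega>\<in>space M. H \<omega> = a})"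
    by (subst Bochner_Integration.integral_sum) (auto simp: labels_def emeasure_eq_measure)
  finally show ?thesis .
qed

text \<open>Stated without division since \<open>P\<close> may vanish; then the bounds force \<open>K = J = 0\<close>.\<close>
lemma scale_from_cross_product:
  fixes K J P c :: real
  assumes "K * P = J * (c * P)" "0 \<le> K" "K \<le> J" "J \<le> P"
  shows "K = c * J"
proof (cases "P = 0")
  case True
  with assms(2-4) have "K = 0" "J = 0" by linarith+
  then show ?thesis by simp
next
  case False
  with assms(1) show ?thesis by simp
qed

definition noise_kernel :: "real \<Rightarrow> real \<Rightarrow> int \<Rightarrow> int \<Rightarrow> real" where
  "noise_kernel ep em y yt =
     (if y = 1 then (if yt = 1 then 1 - ep else ep) else (if yt = 1 then em else 1 - em))"

locale noisy_labels = prob_space M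
  for M :: "'a measure" and H Y Yt :: "'a \<Rightarrow> int" and ep em :: real +
  assumes H_measurable [measurable]: "H \<in> M \<rightarrow>\<^sub>M count_space UNIV"
    and Y_measurable [measurable]: "Y \<in> M \<rightarrow>\<^sub>M count_space UNIV"
    and Yt_measurable [measurable]: "Yt \<in> M \<rightarrow>\<^sub>M count_space UNIV"
    and H_labels: "\<forall>\<omega>\<in>space M. H \<omega> \<in> labels"
    and Y_labels: "\<forall>\<omega>\<in>space M. Y \<omega> \<in> labels"
    and Yt_labels: "\<forall>\<omega>\<in>space M. Yt \<omega> \<in> labels"
    and flip_pos: "measure M {\<omega>\<in>space M. Y \<omega> = 1 \<and> Yt \<omega> = -1} = ep * measure M {\<omega>\<in>space M. Y \<omega> = 1}"
    and flip_neg: "measure M {\<omega>\<in>space M. Y \<omega> = -1 \<and> Yt \<omega> = 1} = em * measure M {\<omega>\<in>space M. Y \<omega> = -1}"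
    and cond_indep: "measure M {\<omega>\<in>space M. H \<omega> = a \<and> Y \<omega> = y \<and> Yt \<omega> = yt} * measure M {\<omega>\<in>space M. Y \<omega> = y}
       = measure M {\<omega>\<in>space M. H \<omega> = a \<and> Y \<omega> = y} * measure M {\<omega>\<in>space M. Y \<omega> = y \<and> Yt \<omega> = yt}"
begin

lemma label_transition:
  assumes "y \<in> labels" "yt \<in> labels"
  shows "measure M {\<omega>\<in>space M. Y \<omega> = y \<and> Yt \<omega> = yt}
       = noise_kernel ep em y yt * measure M {\<omega>\<in>space M. Y \<omega> = y}"
proof -
  have "measure M {\<omega>\<in>space M. Y \<omega> = y}
      = measure M {\<omega>\<in>space M. Y \<omega> = y \<and> Yt \<omega> = 1} + measure M {\<omega>\<in>space M. Y \<omega> = y \<and> Yt \<omega> = -1}"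
    using measure_split_label[of "\<lambda>\<omega>. Y \<omega> = y" Yt] Yt_labels by (simp add: sum_labels)
  with assms flip_pos flip_neg show ?thesis
    by (auto simp: labels_def noise_kernel_def algebra_simps)
qed

lemma joint_transition:
  assumes "y \<in> labels" "yt \<in> labels"
  shows "measure M {\<omega>\<in>space M. H \<omega> = a \<and> Y \<omega> = y \<and> Yt \<omega> = yt}
       = noise_kernel ep em y yt * measure M {\<omega>\<in>space M. H \<omega> = a \<and> Y \<omega> = y}"
proof (rule scale_from_cross_product)
  show "measure M {\<omega>\<in>space M. H \<omega> = a \<and> Y \<omega> = y \<and> Yt \<omega> = yt} * measure M {\<omega>\<in>space M. Y \<omega> = y}
      = measure M {\<omega>\<in>space M. H \<omega> = a \<and> Y \<omega> = y}
        * (noise_kernel ep em y yt * measure M {\<omega>\<in>space M. Y \<omega> = y})"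
    using cond_indep label_transition[OF assms] by simp
qed (auto intro!: finite_measure_mono)

lemma noisy_joint_law:
  assumes "yt \<in> labels"
  shows "joint_law M H Yt (a, yt) = (\<Sum>y\<in>labels. noise_kernel ep em y yt * joint_law M H Y (a, y))"
proof -
  have "joint_law M H Yt (a, yt)
      = (\<Sum>y\<in>labels. measure M {\<omega>\<in>space M. H \<omega> = a \<and> Y \<omega> = y \<and> Yt \<omega> = yt})"
    unfolding joint_law_def using measure_split_label[of "\<lambda>\<omega>. H \<omega> = a \<and> Yt \<omega> = yt" Y] Y_labels
    by (simp add: conj_ac)
  then show ?thesis
    using joint_transition[OF _ assms] by (simp add: joint_law_def sum_labels labels_def)
qed

lemma noisy_label_law:
  assumes "yt \<in> labels"
  shows "measure M {\<omega>\<in>space M. Yt \<omega> = yt}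
       = (\<Sum>y\<in>labels. noise_kernel ep em y yt * measure M {\<omega>\<in>space M. Y \<omega> = y})"
proof -
  have "measure M {\<omega>\<in>space M. Yt \<omega> = yt}
      = (\<Sum>y\<in>labels. measure M {\<omega>\<in>space M. Y \<omega> = y \<and> Yt \<omega> = yt})"
    using measure_split_label[of "\<lambda>\<omega>. Yt \<omega> = yt" Y] Y_labels by (simp add: conj_ac)
  then show ?thesis
    using label_transition[OF _ assms] by (simp add: sum_labels labels_def)
qed

lemma sum_label_law: "(\<Sum>y\<in>labels. measure M {\<omega>\<in>space M. Y \<omega> = y}) = 1"
  using measure_split_label[of "\<lambda>_. True" Y] Y_labels prob_space by simp

lemma measure_H_eq_sum_joint_law:
  "measure M {\<omega>\<in>space M. H \<omega> = a} = (\<Sum>y\<in>labels. joint_law M H Y (a, y))"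
  using measure_split_label[of "\<lambda>\<omega>. H \<omega> = a" Y] Y_labels by (simp add: joint_law_def)

lemma lexp_noisy_joint_law:
  "lexp (joint_law M H Yt) G
     = (1 - ep - em) * lexp (joint_law M H Y) G
       + ep * (\<integral>\<omega>. G (H \<omega>, -1) \<partial>M) + em * (\<integral>\<omega>. G (H \<omega>, 1) \<partial>M)"
  unfolding lexp_eq_sum_labels measure_H_eq_sum_joint_law
    integral_label_valued[OF H_measurable H_labels, of "\<lambda>a. G (a, _)"]
  by (simp add: noisy_joint_law sum_labels labels_def noise_kernel_def algebra_simps)

lemma lexp_noisy_prod_law:
  "lexp (prod_law M H Yt) G
     = (1 - ep - em) * lexp (prod_law M H Y) G
       + ep * (\<integral>\<omega>. G (H \<omega>, -1) \<partial>M) + em * (\<integral>\<omega>. G (H \<omega>, 1) \<partial>M)"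
proof -
  have Y_neg: "measure M {\<omega>\<in>space M. Y \<omega> = -1} = 1 - measure M {\<omega>\<in>space M. Y \<omega> = 1}"
    using sum_label_law by (simp add: sum_labels)
  show ?thesis
    unfolding lexp_eq_sum_labels prod_law_def
      integral_label_valued[OF H_measurable H_labels, of "\<lambda>a. G (a, _)"]
    by (simp add: noisy_label_law sum_labels labels_def noise_kernel_def Y_neg algebra_simps)
qed

end

lemma cond_indep_comp:
  assumes [measurable]: "X \<in> M \<rightarrow>\<^sub>M SX" "h \<in> SX \<rightarrow>\<^sub>M count_space UNIV"
    and "\<forall>A\<in>sets SX. \<forall>y yt.
           measure M {\<omega>\<in>space M. X \<omega> \<in> A \<and> Y \<omega> = y \<and> Yt \<omega> = yt} * measure M {\<omega>\<in>space M. Y \<omega> = y}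
         = measure M {\<omega>\<in>space M. X \<omega> \<in> A \<and> Y \<omega> = y} * measure M {\<omega>\<in>space M. Y \<omega> = y \<and> Yt \<omega> = yt}"
  shows "measure M {\<omega>\<in>space M. h (X \<omega>) = a \<and> Y \<omega> = y \<and> Yt \<omega> = yt} * measure M {\<omega>\<in>space M. Y \<omega> = y}
       = measure M {\<omega>\<in>space M. h (X \<omega>) = a \<and> Y \<omega> = y} * measure M {\<omega>\<in>space M. Y \<omega> = y \<and> Yt \<omega> = yt}"
proof -
  have "h -` {a} \<inter> space SX \<in> sets SX" by measurable
  with assms(3) have "measure M {\<omega>\<in>space M. X \<omega> \<in> h -` {a} \<inter> space SX \<and> Y \<omega> = y \<and> Yt \<omega> = yt}
        * measure M {\<omega>\<in>space M. Y \<omega> = y}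
      = measure M {\<omega>\<in>space M. X \<omega> \<in> h -` {a} \<inter> space SX \<and> Y \<omega> = y}
        * measure M {\<omega>\<in>space M. Y \<omega> = y \<and> Yt \<omega> = yt}"
    by blast
  moreover have "{\<omega>\<in>space M. X \<omega> \<in> h -` {a} \<inter> space SX \<and> P \<omega>} = {\<omega>\<in>space M. h (X \<omega>) = a \<and> P \<omega>}"
    for P using measurable_space[OF assms(1)] by auto
  ultimately show ?thesis by simp
qed

theorem theorem3:
  fixes M :: "'a measure" and SX :: "'x measure"
    and X :: "'a \<Rightarrow> 'x" and Y Yt :: "'a \<Rightarrow> int"
    and ep em :: real and f :: "real \<Rightarrow> ereal"
    and h :: "'x \<Rightarrow> int" and g :: "int \<times> int \<Rightarrow> real"
  assumes "prob_space M"
    and "X \<in> M \<rightarrow>\<^sub>M SX"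
    and "Y \<in> M \<rightarrow>\<^sub>M count_space UNIV"
    and "Yt \<in> M \<rightarrow>\<^sub>M count_space UNIV"
    and "\<forall>\<omega>\<in>space M. Y \<omega> \<in> labels"
    and "\<forall>\<omega>\<in>space M. Yt \<omega> \<in> labels"
    \<comment> \<open>noise rates e+ = P(Yt=-1 | Y=+1), e- = P(Yt=+1 | Y=-1)\<close>
    and "measure M {\<omega>\<in>space M. Y \<omega> = 1 \<and> Yt \<omega> = -1} = ep * measure M {\<omega>\<in>space M. Y \<omega> = 1}"
    and "measure M {\<omega>\<in>space M. Y \<omega> = -1 \<and> Yt \<omega> = 1} = em * measure M {\<omega>\<in>space M. Y \<omega> = -1}"
    and "0 \<le> ep" and "0 \<le> em" and "ep + em < 1"
    \<comment> \<open>Yt conditionally independent of X given Y\<close>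
    and "\<forall>A\<in>sets SX. \<forall>y yt.
           measure M {\<omega>\<in>space M. X \<omega> \<in> A \<and> Y \<omega> = y \<and> Yt \<omega> = yt} * measure M {\<omega>\<in>space M. Y \<omega> = y}
         = measure M {\<omega>\<in>space M. X \<omega> \<in> A \<and> Y \<omega> = y} * measure M {\<omega>\<in>space M. Y \<omega> = y \<and> Yt \<omega> = yt}"
    and "convex_ext f" and "\<forall>x. f x \<noteq> -\<infinity>" and "f 1 = 0"
    and "h \<in> SX \<rightarrow>\<^sub>M count_space UNIV"
    and "\<forall>x\<in>space SX. h x \<in> labels"
    and "\<forall>z\<in>labels \<times> labels. g z \<in> fdom f"
  shows "dvar M X Yt h f g = (1 - ep - em) * dvar M X Y h f g + Bias ep em M X h f g"
proof -
  interpret noisy_labels M "\<lambda>\<omega>. h (X \<omega>)" Y Yt ep em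
  proof (intro noisy_labels.intro noisy_labels_axioms.intro)
    show "(\<lambda>\<omega>. h (X \<omega>)) \<in> M \<rightarrow>\<^sub>M count_space UNIV" using assms(2,16) by measurable
    show "\<forall>\<omega>\<in>space M. h (X \<omega>) \<in> labels" using measurable_space[OF assms(2)] assms(17) by simp
  qed (fact assms cond_indep_comp[OF assms(2,16,12)])+
  show ?thesis
    by (simp add: dvar_def Bias_def Delta_def lexp_noisy_joint_law lexp_noisy_prod_law algebra_simps)
qed

end
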